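(* Let $G$ be a $P_5$-free graph and let $C\subseteq V(G)$. Suppose $C$ is partitioned into independent sets $C_1,\dots,C_k$ of $G$, and let $D\subseteq C$ be a set such that $G[D]$ is connected, every vertex of $C$ is in $D$ or has a neighbor in $D$, and $D\cap C_r\neq\emptyset$ for every $r\in\{1,\dots,k\}$. Let $X := N(C)\setminus N(D)$ and $Y := V(G)\setminus N[C]$. Then there is no edge of $G$ with one endpoint in $X$ and the other in $Y$.
   Context: For $A\subseteq V(G)$, $N(A)$ is the set of vertices outside $A$ having a neighbor in $A$ (open neighborhood), and $N[A]=A\cup N(A)$. A graph is $P_5$-free if it has no induced path on 5 vertices. *)

theory Defs
  imports Main
begin

definition graph :: "'a set \<Rightarrow> ('a \<Rightarrow> 'a \<Rightarrow> bool) \<Rightarrow> bool" where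
  "graph V E \<longleftrightarrow> finite V \<and> (\<forall>u v. E u v \<longrightarrow> u \<in> V \<and> v \<in> V)
     \<and> (\<forall>u v. E u v \<longrightarrow> E v u) \<and> (\<forall>v. \<not> E v v)"

definition induced_P5 :: "'a set \<Rightarrow> ('a \<Rightarrow> 'a \<Rightarrow> bool) \<Rightarrow> (nat \<Rightarrow> 'a) \<Rightarrow> bool" where
  "induced_P5 V E v \<longleftrightarrow> (\<forall>i<5. v i \<in> V) \<and> inj_on v {0..<5}
     \<and> (\<forall>i<5. \<forall>j<5. E (v i) (v j) \<longleftrightarrow> (i = j + 1 \<or> j = i + 1))"

definition P5_free :: "'a set \<Rightarrow> ('a \<Rightarrow> 'a \<Rightarrow> bool) \<Rightarrow> bool" where
  "P5_free V E \<longleftrightarrow> \<not> (\<exists>v. induced_P5 V E v)"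

definition nbhd :: "'a set \<Rightarrow> ('a \<Rightarrow> 'a \<Rightarrow> bool) \<Rightarrow> 'a set \<Rightarrow> 'a set" where
  "nbhd V E A = {v \<in> V - A. \<exists>a\<in>A. E v a}"

definition cnbhd :: "'a set \<Rightarrow> ('a \<Rightarrow> 'a \<Rightarrow> bool) \<Rightarrow> 'a set \<Rightarrow> 'a set" where
  "cnbhd V E A = A \<union> nbhd V E A"

definition independent :: "('a \<Rightarrow> 'a \<Rightarrow> bool) \<Rightarrow> 'a set \<Rightarrow> bool" where
  "independent E S \<longleftrightarrow> (\<forall>u\<in>S. \<forall>w\<in>S. \<not> E u w)"

definition connected_induced :: "('a \<Rightarrow> 'a \<Rightarrow> bool) \<Rightarrow> 'a set \<Rightarrow> bool" where
  "connected_induced E D \<longleftrightarrow> D \<noteq> {} \<and>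
     (\<forall>x\<in>D. \<forall>y\<in>D. (\<lambda>u w. u \<in> D \<and> w \<in> D \<and> E u w)\<^sup>*\<^sup>* x y)"

end

theory Submission
  imports Defs
begin

text \<open>Suppose x \<in> N(C) - N(D) has a neighbour y \<notin> N[C], and let c \<in> C be a neighbour of x.
  Then c \<notin> D, so c has a neighbour in D; it also has a non-neighbour in D, namely a vertex of D
  in the independent class of c. Walking inside the connected set D from the one to the other
  yields an edge u w of D with c adjacent to u but not to w, and y - x - c - u - w is an
  induced P5.\<close>

lemma rtranclp_leaves_predicate:
  assumes "R\<^sup>*\<^sup>* a b" "Q a" "\<not> Q b"
  shows "\<exists>u w. R u w \<and> Q u \<and> \<not> Q w"
  using assms by (induction rule: rtranclp_induct) auto

lemma connected_induced_mixed_edge: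
  assumes "connected_induced E D" "d \<in> D" "E c d" "d' \<in> D" "\<not> E c d'"
  obtains u w where "u \<in> D" "w \<in> D" "E u w" "E c u" "\<not> E c w"
proof -
  have "(\<lambda>u w. u \<in> D \<and> w \<in> D \<and> E u w)\<^sup>*\<^sup>* d d'"
    using assms(1,2,4) unfolding connected_induced_def by blast
  then show thesis
    using rtranclp_leaves_predicate[where Q = "E c"] assms(3,5) that by blast
qed

lemma induced_P5I:
  assumes "graph V E" "{a, b, c, d, e} \<subseteq> V"
    and "E a b" "E b c" "E c d" "E d e"
    and "\<not> E a c" "\<not> E a d" "\<not> E a e" "\<not> E b d" "\<not> E b e" "\<not> E c e"
  shows "induced_P5 V E (\<lambda>i. [a, b, c, d, e] ! i)"
proof -
  have sym: "\<And>u v. E u v \<Longrightarrow> E v u" and irrefl: "\<And>v. \<not> E v v"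
    using assms(1) unfolding graph_def by blast+
  have less5: "(\<forall>i<5. Q i) \<longleftrightarrow> Q 0 \<and> Q 1 \<and> Q 2 \<and> Q 3 \<and> Q (4::nat)" for Q
    by (auto simp: numeral_eq_Suc less_Suc_eq)
  \<comment> \<open>Injectivity needs no hypothesis: equal vertices would have to agree on all listed (non-)edges.\<close>
  show ?thesis
    unfolding induced_P5_def inj_on_def atLeastLessThan_iff less5[unfolded atLeastLessThan_iff]
    using assms(2-) sym irrefl by (auto simp: numeral_eq_Suc less_Suc_eq)
qed

theorem claim4p3:
  fixes V :: "'a set" and E :: "'a \<Rightarrow> 'a \<Rightarrow> bool"
    and C D :: "'a set" and P :: "nat \<Rightarrow> 'a set" and k :: nat
  assumes "graph V E"
    and "P5_free V E"
    and "C \<subseteq> V"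
    and "(\<Union>r\<in>{1..k}. P r) = C"
    and "\<forall>r\<in>{1..k}. \<forall>s\<in>{1..k}. r \<noteq> s \<longrightarrow> P r \<inter> P s = {}"
    and "\<forall>r\<in>{1..k}. independent E (P r)"
    and "D \<subseteq> C"
    and "connected_induced E D"
    and "\<forall>c\<in>C. c \<in> D \<or> (\<exists>d\<in>D. E c d)"
    and "\<forall>r\<in>{1..k}. D \<inter> P r \<noteq> {}"
  shows "\<not> (\<exists>x y. x \<in> nbhd V E C - nbhd V E D \<and> y \<in> V - cnbhd V E C \<and> E x y)"
proof
  assume "\<exists>x y. x \<in> nbhd V E C - nbhd V E D \<and> y \<in> V - cnbhd V E C \<and> E x y"
  then obtain x y c where x: "x \<in> V" "x \<notin> C" "\<forall>d\<in>D. \<not> E x d"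
    and y: "y \<in> V" "y \<notin> C" "\<forall>c\<in>C. \<not> E y c" and c: "c \<in> C" "E x c" and "E x y"
    using assms(7) unfolding nbhd_def cnbhd_def by blast
  have sym: "\<And>u v. E u v \<Longrightarrow> E v u"
    using assms(1) unfolding graph_def by blast
  have "c \<notin> D" using c x by blast
  then obtain d where d: "d \<in> D" "E c d" using assms(9) c by blast
  obtain r d' where "r \<in> {1..k}" "c \<in> P r" "d' \<in> D" "d' \<in> P r"
    using c assms(4,10) by blast
  then have "\<not> E c d'" using assms(6) unfolding independent_def by blast
  then obtain u w where uw: "u \<in> D" "w \<in> D" "E u w" "E c u" "\<not> E c w"
    using connected_induced_mixed_edge[OF assms(8) d \<open>d' \<in> D\<close>] by blast
  have "induced_P5 V E (\<lambda>i. [y, x, c, u, w] ! i)"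
    using uw assms(3,7) x y c \<open>E x y\<close> \<open>c \<notin> D\<close>
    by (intro induced_P5I[OF assms(1)]) (auto dest: sym)
  then show False using assms(2) unfolding P5_free_def by blast
qed

end
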